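(* Let $b$ be a topologically nilpotent element of a complex Banach algebra. Then $b$ is nilpotent if and only if $e^b-1$ is nilpotent. Moreover, for every $d\in\mathbb{N}$, $b^d=0$ if and only if $(e^b-1)^d=0$.
   Context: An element $b$ of a Banach algebra is topologically nilpotent if $\|b^n\|^{1/n}\to0$ as $n\to\infty$. $e^b=\sum_{n\ge0}b^n/n!$, computed in the algebra or in its unitization. *)

theory Defs
  imports "HOL-Analysis.Analysis"
begin

text \<open>A complex Banach algebra (taken unital: a non-unital algebra is handled by
passing to its unitization, where all notions involved are unchanged).\<close>

class complex_banach_algebra_1 = real_normed_algebra_1 + banach +
  fixes scaleC :: "complex \<Rightarrow> 'a \<Rightarrow> 'a"
  assumes scaleC_of_real: "scaleC (complex_of_real r) x = scaleR r x"
    and scaleC_add_right: "scaleC a (x + y) = scaleC a x + scaleC a y"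
    and scaleC_add_left: "scaleC (a + c) x = scaleC a x + scaleC c x"
    and scaleC_scaleC: "scaleC a (scaleC c x) = scaleC (a * c) x"
    and scaleC_one: "scaleC 1 x = x"
    and scaleC_mult_left: "scaleC a x * y = scaleC a (x * y)"
    and scaleC_mult_right: "x * scaleC a y = scaleC a (x * y)"
    and norm_scaleC: "norm (scaleC a x) = cmod a * norm x"

definition topologically_nilpotent :: "'a::real_normed_algebra_1 \<Rightarrow> bool" where
  "topologically_nilpotent b \<longleftrightarrow> (\<lambda>n. root n (norm (b ^ n))) \<longlonglongrightarrow> 0"

definition nilpotent :: "'a::{monoid_mult,zero} \<Rightarrow> bool" where
  "nilpotent b \<longleftrightarrow> (\<exists>n. b ^ n = 0)"

end

theory Submission
  imports Defs
begin

text \<open>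
  Splitting off the first two terms of the exponential series gives
  \<open>e\<^sup>b - 1 = b (1 + b v)\<close> with \<open>v = \<Sum>\<^sub>n b\<^sup>n / (n + 2)!\<close> commuting with \<open>b\<close>.
  Since \<open>b\<close> is topologically nilpotent and commutes with \<open>v\<close>, so is \<open>b v\<close>; hence the
  Neumann series of \<open>-b v\<close> converges and \<open>1 + b v\<close> has a right inverse.
  Therefore \<open>(e\<^sup>b - 1)\<^sup>d = b\<^sup>d (1 + b v)\<^sup>d\<close> vanishes exactly when \<open>b\<^sup>d\<close> does.
\<close>

lemma power_mult_commuting:
  fixes a c :: "'a::monoid_mult"
  assumes "a * c = c * a"
  shows "(a * c) ^ n = a ^ n * c ^ n"
proof (induction n)
  case (Suc n)
  have "(a * c) ^ Suc n = a * (c * a ^ n) * c ^ n"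
    by (simp add: Suc mult.assoc)
  also have "c * a ^ n = a ^ n * c"
    using power_commuting_commutes[OF assms] by simp
  finally show ?case
    by (simp add: mult.assoc)
qed simp

lemma power_mult_right_invertible_eq_0_iff:
  fixes a u :: "'a::ring_1"
  assumes "a * u = u * a" and "u * s = 1"
  shows "(a * u) ^ n = 0 \<longleftrightarrow> a ^ n = 0"
proof
  assume "(a * u) ^ n = 0"
  then have "a ^ n * u ^ n * s ^ n = 0"
    by (simp add: power_mult_commuting[OF assms(1)])
  then show "a ^ n = 0"
    by (simp add: mult.assoc left_right_inverse_power[OF assms(2)])
qed (simp add: power_mult_commuting[OF assms(1)])

lemma one_minus_mult_geometric_sum:
  fixes x :: "'a::ring_1"
  shows "(1 - x) * (\<Sum>i<n. x ^ i) = 1 - x ^ n"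
proof -
  have "(1 - x) * x ^ i = x ^ i - x ^ Suc i" for i
    by (simp add: left_diff_distrib)
  then show ?thesis
    by (simp only: sum_distrib_left sum_lessThan_telescope' power_0)
qed

lemma one_minus_mult_suminf_power:
  fixes x :: "'a::real_normed_algebra_1"
  assumes "summable (\<lambda>n. x ^ n)"
  shows "(1 - x) * (\<Sum>n. x ^ n) = 1"
proof (rule LIMSEQ_unique)
  show "(\<lambda>n. (1 - x) * (\<Sum>i<n. x ^ i)) \<longlonglongrightarrow> (1 - x) * (\<Sum>n. x ^ n)"
    by (intro tendsto_mult tendsto_const summable_LIMSEQ assms)
  show "(\<lambda>n. (1 - x) * (\<Sum>i<n. x ^ i)) \<longlonglongrightarrow> 1"
    using tendsto_diff[OF tendsto_const summable_LIMSEQ_zero[OF assms], of 1]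
    by (simp add: one_minus_mult_geometric_sum)
qed

lemma topologically_nilpotent_uminus:
  fixes w :: "'a::real_normed_algebra_1"
  assumes "topologically_nilpotent w"
  shows "topologically_nilpotent (- w)"
proof -
  have "norm ((- w) ^ n) = norm (w ^ n)" for n
    by (cases "even n") (simp_all add: power_minus_odd power_minus_even)
  then show ?thesis
    using assms by (simp add: topologically_nilpotent_def)
qed

lemma topologically_nilpotent_mult_commuting:
  fixes b v :: "'a::real_normed_algebra_1"
  assumes b: "topologically_nilpotent b" and "b * v = v * b"
  shows "topologically_nilpotent (b * v)"
  unfolding topologically_nilpotent_def
proof (rule tendsto_sandwich)
  show "\<forall>\<^sub>F n in sequentially. 0 \<le> root n (norm ((b * v) ^ n))"
    by (simp add: real_root_ge_zero)
  show "\<forall>\<^sub>F n in sequentially. root n (norm ((b * v) ^ n)) \<le> root n (norm (b ^ n)) * norm v"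
    using eventually_gt_at_top[of "0::nat"]
  proof eventually_elim
    case (elim n)
    have "norm ((b * v) ^ n) \<le> norm (b ^ n) * norm (v ^ n)"
      unfolding power_mult_commuting[OF assms(2)] by (rule norm_mult_ineq)
    also have "\<dots> \<le> norm (b ^ n) * norm v ^ n"
      by (intro mult_left_mono norm_power_ineq) simp
    finally have "root n (norm ((b * v) ^ n)) \<le> root n (norm (b ^ n) * norm v ^ n)"
      using elim by simp
    also have "\<dots> = root n (norm (b ^ n)) * norm v"
      using elim by (simp add: real_root_mult real_root_power_cancel)
    finally show ?case .
  qed
  show "(\<lambda>n. root n (norm (b ^ n)) * norm v) \<longlonglongrightarrow> 0"
    using tendsto_mult_left_zero[OF b[unfolded topologically_nilpotent_def]] .
qed simp

lemma summable_power_if_topologically_nilpotent: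
  fixes w :: "'a::{real_normed_algebra_1,banach}"
  assumes "topologically_nilpotent w"
  shows "summable (\<lambda>n. w ^ n)"
  using assms unfolding topologically_nilpotent_def
  by (intro root_test_convergence') (simp add: limsup_root_limit' zero_ereal_def)

lemma one_plus_topologically_nilpotent_right_invertible:
  fixes w :: "'a::{real_normed_algebra_1,banach}"
  assumes "topologically_nilpotent w"
  shows "(1 + w) * (\<Sum>n. (- w) ^ n) = 1"
  using one_minus_mult_suminf_power[OF summable_power_if_topologically_nilpotent
      [OF topologically_nilpotent_uminus[OF assms]]]
  by simp

definition exp_tail :: "'a::real_normed_algebra_1 \<Rightarrow> 'a" where
  "exp_tail b = (\<Sum>n. b ^ n /\<^sub>R fact (n + 2))"

lemma summable_exp_tail_series:
  fixes b :: "'a::{real_normed_algebra_1,banach}"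
  shows "summable (\<lambda>n. b ^ n /\<^sub>R fact (n + 2))"
proof (rule summable_comparison_test'[where N=0])
  show "summable (\<lambda>n. norm b ^ n /\<^sub>R fact n)"
    by (rule summable_exp_generic)
  fix n :: nat
  have "norm (b ^ n) / fact (n + 2) \<le> norm b ^ n / fact (n + 2)"
    by (intro divide_right_mono norm_power_ineq) simp
  also have "\<dots> \<le> norm b ^ n / fact n"
    by (intro divide_left_mono fact_mono) auto
  finally show "norm (b ^ n /\<^sub>R fact (n + 2)) \<le> norm b ^ n /\<^sub>R fact n"
    by (simp add: divide_inverse_commute)
qed

lemma exp_tail_commute:
  fixes b :: "'a::{real_normed_algebra_1,banach}"
  shows "b * exp_tail b = exp_tail b * b"
proof -
  have "b * exp_tail b = (\<Sum>n. b * (b ^ n /\<^sub>R fact (n + 2)))"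
    unfolding exp_tail_def by (rule suminf_mult[symmetric, OF summable_exp_tail_series])
  also have "\<dots> = (\<Sum>n. b ^ n /\<^sub>R fact (n + 2) * b)"
    by (simp add: power_commutes)
  also have "\<dots> = exp_tail b * b"
    unfolding exp_tail_def by (rule suminf_mult2[symmetric, OF summable_exp_tail_series])
  finally show ?thesis .
qed

lemma exp_minus_one_eq_exp_tail:
  fixes b :: "'a::{real_normed_algebra_1,banach}"
  shows "exp b - 1 = b * (1 + b * exp_tail b)"
proof -
  have "exp b = (\<Sum>n. b ^ (n + 2) /\<^sub>R fact (n + 2)) + (\<Sum>i<2. b ^ i /\<^sub>R fact i)"
    unfolding exp_def by (rule suminf_split_initial_segment[OF summable_exp_generic])
  also have "(\<lambda>n. b ^ (n + 2) /\<^sub>R fact (n + 2)) = (\<lambda>n. b * b * (b ^ n /\<^sub>R fact (n + 2)))"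
    by (simp add: fun_eq_iff numeral_2_eq_2 mult.assoc)
  also have "(\<Sum>n. b * b * (b ^ n /\<^sub>R fact (n + 2))) = b * b * exp_tail b"
    unfolding exp_tail_def by (rule suminf_mult[OF summable_exp_tail_series])
  finally show ?thesis
    by (simp add: numeral_2_eq_2 distrib_left mult.assoc)
qed

theorem lemma5:
  fixes b :: "'a::complex_banach_algebra_1"
  assumes "topologically_nilpotent b"
  shows "(nilpotent b \<longleftrightarrow> nilpotent (exp b - 1)) \<and>
         (\<forall>d::nat. b ^ d = 0 \<longleftrightarrow> (exp b - 1) ^ d = 0)"
proof -
  define u where "u = 1 + b * exp_tail b"
  have "b * (b * exp_tail b) = b * exp_tail b * b"
    by (metis mult.assoc exp_tail_commute)
  then have commute: "b * u = u * b"
    unfolding u_def by (simp add: distrib_left distrib_right)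
  have "u * (\<Sum>n. (- (b * exp_tail b)) ^ n) = 1"
    unfolding u_def using assms exp_tail_commute
    by (intro one_plus_topologically_nilpotent_right_invertible
        topologically_nilpotent_mult_commuting)
  then have "b ^ d = 0 \<longleftrightarrow> (exp b - 1) ^ d = 0" for d
    using power_mult_right_invertible_eq_0_iff[OF commute]
    by (simp add: exp_minus_one_eq_exp_tail flip: u_def)
  then show ?thesis
    unfolding nilpotent_def by blast
qed

end
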